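(* Let $A$ be the filtered boundary matrix of a Morse decomposition $\{M_p\mid p\in P\}$ with respect to an admissible enumeration $\sigma_1,\dots,\sigma_n$. At every stage of the execution of ConMat on $A$, if the current matrix $B$ has $B[l,j]\neq0$ then $[\sigma_l]_P\le_P[\sigma_j]_P$. Moreover, if ConMat adds column $k$ to column $j$ during its execution, then $[\sigma_k]_P\le_P[\sigma_j]_P$.
   Context: $K$ is a finite simplicial complex ($\tau\le\sigma$: $\tau$ is a face of $\sigma$; $\mathrm{cl}(\sigma)=\{\tau:\tau\le\sigma\}$). A multivector field $\mathcal V$ on $K$ is a partition of $K$ into convex sets $V$ (if $\sigma,\tau\in V$ and $\sigma\le\mu\le\tau$ then $\mu\in V$); $[\sigma]_{\mathcal V}$ is the part containing $\sigma$, $F_{\mathcal V}(\sigma)=[\sigma]_{\mathcal V}\cup\mathrm{cl}(\sigma)$, and a path is a sequence $\sigma_1,\dots,\sigma_r$ with $\sigma_k\in F_{\mathcal V}(\sigma_{k-1})$. A Morse decomposition indexed by a finite poset $(P,\le_P)$ is a partition $K=\bigsqcup_{p\in P}M_p$ such that every path from $M_p$ to $M_q$ has $q\le_P p$; $[\sigma]_P$ is the $p$ with $\sigma\in M_p$. An admissible enumeration is $\sigma_1,\dots,\sigma_n$ of all simplices of $K$ such that (a) for some linear extension $\le_{lin}$ of $\le_P$, $i\le j\Rightarrow[\sigma_i]_P\le_{lin}[\sigma_j]_P$; (b) if $\sigma_i$ is a proper face of $\sigma_j$ then $i<j$. The filtered boundary matrix $A$ is the $n\times n$ $\mathbb Z_2$-matrix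 with $A[i,j]=1$ iff $\sigma_i$ is a codimension-one face of $\sigma_j$; row/column $i$ represents $\sigma_i$. For a nonzero column $j$ of a matrix $B$, $\mathrm{low}_B(j)$ is the largest $i$ with $B[i,j]=1$; column $j$ is homogeneous if nonzero and $\sigma_j$, $\sigma_{\mathrm{low}_B(j)}$ are in the same Morse set. ConMat reduction phase on $A$ (in place): for $j=1,\dots,n$: for $i=\mathrm{low}_A(j)$ down to $1$: if $A[i,j]=1$ and some column $s<j$ of the current matrix is homogeneous with $\mathrm{low}_A(s)=i$, add column $s$ to column $j$ (mod 2). *)

theory Defs
  imports Main
begin

definition simplicial_complex :: "'v set set \<Rightarrow> bool" where
  "simplicial_complex K \<longleftrightarrow> finite K \<and> (\<forall>\<sigma>\<in>K. finite \<sigma> \<and> \<sigma> \<noteq> {}) \<and>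
     (\<forall>\<sigma>\<in>K. \<forall>\<tau>. \<tau> \<noteq> {} \<and> \<tau> \<subseteq> \<sigma> \<longrightarrow> \<tau> \<in> K)"

definition closure_cl :: "'v set set \<Rightarrow> 'v set \<Rightarrow> 'v set set" where
  "closure_cl K \<sigma> = {\<tau> \<in> K. \<tau> \<subseteq> \<sigma>}"

definition codim1_face :: "'v set \<Rightarrow> 'v set \<Rightarrow> bool" where
  "codim1_face \<tau> \<sigma> \<longleftrightarrow> \<tau> \<subseteq> \<sigma> \<and> card \<tau> + 1 = card \<sigma>"

definition multivector_field :: "'v set set \<Rightarrow> 'v set set set \<Rightarrow> bool" where
  "multivector_field K V \<longleftrightarrow>
     (\<forall>W\<in>V. W \<noteq> {} \<and> W \<subseteq> K) \<and> \<Union>V = K \<and>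
     (\<forall>W1\<in>V. \<forall>W2\<in>V. W1 \<noteq> W2 \<longrightarrow> W1 \<inter> W2 = {}) \<and>
     (\<forall>W\<in>V. \<forall>\<sigma>\<in>W. \<forall>\<tau>\<in>W. \<forall>\<mu>\<in>K. \<sigma> \<subseteq> \<mu> \<and> \<mu> \<subseteq> \<tau> \<longrightarrow> \<mu> \<in> W)"

definition mv_class :: "'v set set set \<Rightarrow> 'v set \<Rightarrow> 'v set set" where
  "mv_class V \<sigma> = (THE W. W \<in> V \<and> \<sigma> \<in> W)"

definition F_mv :: "'v set set \<Rightarrow> 'v set set set \<Rightarrow> 'v set \<Rightarrow> 'v set set" where
  "F_mv K V \<sigma> = mv_class V \<sigma> \<union> closure_cl K \<sigma>"

definition mv_path :: "'v set set \<Rightarrow> 'v set set set \<Rightarrow> 'v set list \<Rightarrow> bool" where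
  "mv_path K V xs \<longleftrightarrow> xs \<noteq> [] \<and> set xs \<subseteq> K \<and>
     (\<forall>k. Suc k < length xs \<longrightarrow> xs ! Suc k \<in> F_mv K V (xs ! k))"

definition partial_order_on_set :: "'p set \<Rightarrow> ('p \<Rightarrow> 'p \<Rightarrow> bool) \<Rightarrow> bool" where
  "partial_order_on_set P le \<longleftrightarrow>
     (\<forall>p\<in>P. le p p) \<and>
     (\<forall>p\<in>P. \<forall>q\<in>P. le p q \<and> le q p \<longrightarrow> p = q) \<and>
     (\<forall>p\<in>P. \<forall>q\<in>P. \<forall>r\<in>P. le p q \<and> le q r \<longrightarrow> le p r)"

definition linear_extension :: "'p set \<Rightarrow> ('p \<Rightarrow> 'p \<Rightarrow> bool) \<Rightarrow> ('p \<Rightarrow> 'p \<Rightarrow> bool) \<Rightarrow> bool" where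
  "linear_extension P le lin \<longleftrightarrow> partial_order_on_set P lin \<and>
     (\<forall>p\<in>P. \<forall>q\<in>P. lin p q \<or> lin q p) \<and>
     (\<forall>p\<in>P. \<forall>q\<in>P. le p q \<longrightarrow> lin p q)"

definition morse_decomposition ::
  "'v set set \<Rightarrow> 'v set set set \<Rightarrow> 'p set \<Rightarrow> ('p \<Rightarrow> 'p \<Rightarrow> bool) \<Rightarrow> ('p \<Rightarrow> 'v set set) \<Rightarrow> bool" where
  "morse_decomposition K V P le M \<longleftrightarrow>
     finite P \<and> partial_order_on_set P le \<and>
     (\<forall>p\<in>P. M p \<noteq> {} \<and> M p \<subseteq> K) \<and>
     (\<forall>p\<in>P. \<forall>q\<in>P. p \<noteq> q \<longrightarrow> M p \<inter> M q = {}) \<and>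
     (\<Union>p\<in>P. M p) = K \<and>
     (\<forall>p\<in>P. \<forall>q\<in>P. \<forall>xs. mv_path K V xs \<and> hd xs \<in> M p \<and> last xs \<in> M q \<longrightarrow> le q p)"

definition morse_index :: "'p set \<Rightarrow> ('p \<Rightarrow> 'v set set) \<Rightarrow> 'v set \<Rightarrow> 'p" where
  "morse_index P M \<sigma> = (THE p. p \<in> P \<and> \<sigma> \<in> M p)"

definition admissible_enumeration ::
  "'v set set \<Rightarrow> 'p set \<Rightarrow> ('p \<Rightarrow> 'p \<Rightarrow> bool) \<Rightarrow> ('p \<Rightarrow> 'v set set) \<Rightarrow> nat \<Rightarrow> (nat \<Rightarrow> 'v set) \<Rightarrow> bool" where
  "admissible_enumeration K P le M n \<sigma> \<longleftrightarrow>
     bij_betw \<sigma> {1..n} K \<and>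
     (\<exists>lin. linear_extension P le lin \<and>
        (\<forall>i\<in>{1..n}. \<forall>j\<in>{1..n}. i \<le> j \<longrightarrow> lin (morse_index P M (\<sigma> i)) (morse_index P M (\<sigma> j)))) \<and>
     (\<forall>i\<in>{1..n}. \<forall>j\<in>{1..n}. \<sigma> i \<subset> \<sigma> j \<longrightarrow> i < j)"

section \<open>Z_2 matrices (n x n, rows/columns 1..n) as boolean functions: B i j = entry in row i, column j\<close>

type_synonym z2mat = "nat \<Rightarrow> nat \<Rightarrow> bool"

definition boundary_matrix :: "nat \<Rightarrow> (nat \<Rightarrow> 'v set) \<Rightarrow> z2mat" where
  "boundary_matrix n \<sigma> = (\<lambda>i j. i \<in> {1..n} \<and> j \<in> {1..n} \<and> codim1_face (\<sigma> i) (\<sigma> j))"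

definition col_nonzero :: "nat \<Rightarrow> z2mat \<Rightarrow> nat \<Rightarrow> bool" where
  "col_nonzero n B j \<longleftrightarrow> (\<exists>i\<in>{1..n}. B i j)"

definition low :: "nat \<Rightarrow> z2mat \<Rightarrow> nat \<Rightarrow> nat" where
  "low n B j = Max {i \<in> {1..n}. B i j}"

(* homogeneous column, w.r.t. an index function mi k = [sigma_k]_P *)
definition homogeneous :: "nat \<Rightarrow> (nat \<Rightarrow> 'p) \<Rightarrow> z2mat \<Rightarrow> nat \<Rightarrow> bool" where
  "homogeneous n mi B j \<longleftrightarrow> col_nonzero n B j \<and> mi (low n B j) = mi j"

definition add_col :: "nat \<Rightarrow> nat \<Rightarrow> z2mat \<Rightarrow> z2mat" where
  "add_col s j B = (\<lambda>i c. if c = j then B i j \<noteq> B i s else B i c)"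

section \<open>Execution of the ConMat reduction phase as a (nondeterministic) transition system\<close>

(* Outer j B : about to start processing column j;
   Inner j i B : processing column j, about to examine row i (i = 0 : inner loop finished) *)
datatype conmat_conf = Outer nat z2mat | Inner nat nat z2mat

definition conf_matrix :: "conmat_conf \<Rightarrow> z2mat" where
  "conf_matrix c = (case c of Outer _ B \<Rightarrow> B | Inner _ _ B \<Rightarrow> B)"

(* conmat_step n mi c lbl c' : one step; lbl = Some (s, j) iff column s is added to column j *)
inductive conmat_step :: "nat \<Rightarrow> (nat \<Rightarrow> 'p) \<Rightarrow> conmat_conf \<Rightarrow> (nat \<times> nat) option \<Rightarrow> conmat_conf \<Rightarrow> bool"
  for n mi where
  start_col: "\<lbrakk>1 \<le> j; j \<le> n; col_nonzero n B j\<rbrakk>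
      \<Longrightarrow> conmat_step n mi (Outer j B) None (Inner j (low n B j) B)"
| skip_col: "\<lbrakk>1 \<le> j; j \<le> n; \<not> col_nonzero n B j\<rbrakk>
      \<Longrightarrow> conmat_step n mi (Outer j B) None (Outer (Suc j) B)"
| add: "\<lbrakk>1 \<le> i; B i j; 1 \<le> s; s < j; homogeneous n mi B s; low n B s = i\<rbrakk>
      \<Longrightarrow> conmat_step n mi (Inner j i B) (Some (s, j)) (Inner j (i - 1) (add_col s j B))"
| no_add: "\<lbrakk>1 \<le> i; \<not> (B i j \<and> (\<exists>s. 1 \<le> s \<and> s < j \<and> homogeneous n mi B s \<and> low n B s = i))\<rbrakk>
      \<Longrightarrow> conmat_step n mi (Inner j i B) None (Inner j (i - 1) B)"
| end_col: "conmat_step n mi (Inner j 0 B) None (Outer (Suc j) B)"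

definition conmat_reach :: "nat \<Rightarrow> (nat \<Rightarrow> 'p) \<Rightarrow> z2mat \<Rightarrow> conmat_conf \<Rightarrow> bool" where
  "conmat_reach n mi A c \<longleftrightarrow> (\<lambda>x y. \<exists>lbl. conmat_step n mi x lbl y)\<^sup>*\<^sup>* (Outer 1 A) c"

end

theory Submission
  imports Defs
begin

text \<open>ConMat preserves order compatibility of the matrix: every nonzero entry B[l,j]
  satisfies [\<sigma>_l]_P \<le> [\<sigma>_j]_P. The boundary matrix has this property because a
  codimension-one face is reachable from its coface by a path of length two. Column s is
  added to column j only when B[low s, j] = 1 and column s is homogeneous, so
  [\<sigma>_s]_P = [\<sigma>_(low s)]_P \<le> [\<sigma>_j]_P; this is the second claim, and by transitivity
  the new column j is again order compatible.\<close>

definition order_compatible :: "nat \<Rightarrow> (nat \<Rightarrow> 'p) \<Rightarrow> ('p \<Rightarrow> 'p \<Rightarrow> bool) \<Rightarrow> z2mat \<Rightarrow> bool" where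
  "order_compatible n mi le B \<longleftrightarrow>
     (\<forall>l j. B l j \<longrightarrow> l \<in> {1..n} \<and> j \<in> {1..n} \<and> le (mi l) (mi j))"

lemma order_compatible_add_col:
  assumes B: "order_compatible n mi le B"
    and trans: "transp_on (mi ` {1..n}) le"
    and s: "s \<in> {1..n}" and j: "j \<in> {1..n}"
    and sj: "le (mi s) (mi j)"
  shows "order_compatible n mi le (add_col s j B)"
  unfolding order_compatible_def
proof (intro allI impI)
  fix l c
  assume entry: "add_col s j B l c"
  show "l \<in> {1..n} \<and> c \<in> {1..n} \<and> le (mi l) (mi c)"
  proof (cases "c = j \<and> B l s")
    case True
    then have "l \<in> {1..n}" "le (mi l) (mi s)"
      using B unfolding order_compatible_def by auto
    with True s j sj show ?thesis
      using transp_onD[OF trans, of "mi l" "mi s" "mi j"] by auto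
  next
    case False
    with entry have "B l c"
      unfolding add_col_def by (auto split: if_splits)
    with B show ?thesis
      unfolding order_compatible_def by blast
  qed
qed

lemma conmat_step_add_le:
  assumes "conmat_step n mi c (Some (k, j)) c'"
    and "order_compatible n mi le (conf_matrix c)"
  shows "le (mi k) (mi j)"
  using assms(1)
proof cases
  case (add i B)
  then have "mi i = mi k"
    unfolding homogeneous_def by simp
  moreover have "le (mi i) (mi j)"
    using add assms(2) unfolding order_compatible_def conf_matrix_def by simp
  ultimately show ?thesis by simp
qed

lemma conmat_step_order_compatible:
  assumes step: "conmat_step n mi c lbl c'"
    and inv: "order_compatible n mi le (conf_matrix c)"
    and trans: "transp_on (mi ` {1..n}) le"
  shows "order_compatible n mi le (conf_matrix c')"
  using step
proof cases
  case (add i B j s)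
  have "le (mi s) (mi j)"
    using conmat_step_add_le step inv add(1,2) by blast
  moreover have "j \<in> {1..n}"
    using inv add unfolding order_compatible_def conf_matrix_def by simp
  moreover have "s \<in> {1..n}"
    using add \<open>j \<in> {1..n}\<close> by simp
  ultimately have "order_compatible n mi le (add_col s j B)"
    using order_compatible_add_col inv trans add(1) by (simp add: conf_matrix_def)
  then show ?thesis
    using add(3) by (simp add: conf_matrix_def)
qed (use inv in \<open>simp_all add: conf_matrix_def\<close>)

lemma conmat_reach_order_compatible:
  assumes "conmat_reach n mi A c"
    and "order_compatible n mi le A"
    and "transp_on (mi ` {1..n}) le"
  shows "order_compatible n mi le (conf_matrix c)"
  using assms(1) unfolding conmat_reach_def
proof (induction rule: rtranclp_induct)
  case base
  then show ?case using assms(2) by (simp add: conf_matrix_def)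
next
  case (step c c')
  then show ?case using conmat_step_order_compatible assms(3) by blast
qed

lemma morse_index_mem:
  assumes md: "morse_decomposition K V P le M" and x: "x \<in> K"
  shows "morse_index P M x \<in> P" and "x \<in> M (morse_index P M x)"
proof -
  have "\<exists>!p. p \<in> P \<and> x \<in> M p"
    using md x unfolding morse_decomposition_def by blast
  then have "morse_index P M x \<in> P \<and> x \<in> M (morse_index P M x)"
    unfolding morse_index_def by (rule theI')
  then show "morse_index P M x \<in> P" and "x \<in> M (morse_index P M x)" by auto
qed

lemma morse_index_face_le:
  assumes md: "morse_decomposition K V P le M"
    and "\<sigma> \<in> K" "\<tau> \<in> K" "\<tau> \<subseteq> \<sigma>"
  shows "le (morse_index P M \<tau>) (morse_index P M \<sigma>)"
proof -
  have "mv_path K V [\<sigma>, \<tau>]"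
    using assms unfolding mv_path_def F_mv_def closure_cl_def by (auto simp: less_Suc_eq)
  then show ?thesis
    using md morse_index_mem[OF md] assms(2,3) unfolding morse_decomposition_def
    by (metis last.simps list.sel(1) list.distinct(1))
qed

lemma boundary_matrix_order_compatible:
  assumes md: "morse_decomposition K V P le M"
    and enum: "bij_betw \<sigma> {1..n} K"
  shows "order_compatible n (\<lambda>k. morse_index P M (\<sigma> k)) le (boundary_matrix n \<sigma>)"
  unfolding order_compatible_def boundary_matrix_def codim1_face_def
proof (intro allI impI)
  fix l j
  assume "l \<in> {1..n} \<and> j \<in> {1..n} \<and> \<sigma> l \<subseteq> \<sigma> j \<and> card (\<sigma> l) + 1 = card (\<sigma> j)"
  then show "l \<in> {1..n} \<and> j \<in> {1..n} \<and> le (morse_index P M (\<sigma> l)) (morse_index P M (\<sigma> j))"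
    using morse_index_face_le[OF md] bij_betwE[OF enum] by blast
qed

theorem proposition5:
  fixes K :: "'v set set" and V :: "'v set set set"
    and P :: "'p set" and le :: "'p \<Rightarrow> 'p \<Rightarrow> bool" and M :: "'p \<Rightarrow> 'v set set"
    and n :: nat and \<sigma> :: "nat \<Rightarrow> 'v set"
  assumes "simplicial_complex K"
    and "multivector_field K V"
    and "morse_decomposition K V P le M"
    and "admissible_enumeration K P le M n \<sigma>"
  defines "A \<equiv> boundary_matrix n \<sigma>"
    and "mi \<equiv> (\<lambda>k. morse_index P M (\<sigma> k))"
  shows "(\<forall>c. conmat_reach n mi A c \<longrightarrow>
            (\<forall>l\<in>{1..n}. \<forall>j\<in>{1..n}. conf_matrix c l j \<longrightarrow> le (mi l) (mi j)))
       \<and> (\<forall>c k j c'. conmat_reach n mi A c \<and> conmat_step n mi c (Some (k, j)) c' \<longrightarrow>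
            le (mi k) (mi j))"
proof -
  have enum: "bij_betw \<sigma> {1..n} K"
    using assms(4) unfolding admissible_enumeration_def by blast
  have "mi ` {1..n} \<subseteq> P"
    using morse_index_mem(1)[OF assms(3)] bij_betwE[OF enum] unfolding mi_def by blast
  moreover have "\<forall>p\<in>P. \<forall>q\<in>P. \<forall>r\<in>P. le p q \<and> le q r \<longrightarrow> le p r"
    using assms(3) unfolding morse_decomposition_def partial_order_on_set_def by blast
  ultimately have trans: "transp_on (mi ` {1..n}) le"
    unfolding transp_on_def by (meson subsetD)
  have "order_compatible n mi le A"
    using boundary_matrix_order_compatible[OF assms(3) enum] unfolding A_def mi_def .
  then have reach: "order_compatible n mi le (conf_matrix c)" if "conmat_reach n mi A c" for c
    using conmat_reach_order_compatible that trans by blast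
  show ?thesis
  proof (intro conjI allI impI ballI)
    fix c l j
    assume "conmat_reach n mi A c" "conf_matrix c l j"
    then show "le (mi l) (mi j)"
      using reach unfolding order_compatible_def by blast
  next
    fix c k j c'
    assume "conmat_reach n mi A c \<and> conmat_step n mi c (Some (k, j)) c'"
    then show "le (mi k) (mi j)"
      using reach conmat_step_add_le by blast
  qed
qed

end
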